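(* Let $N\ge1$ and assume $f\in C^{N+1}[a,b]$ with $\|f^{(N+1)}\|_{L^\infty(a,b)}\le C_f$; let $h_I=\max_k(a_k-a_{k-1})$. For each $k=1,\dots,K$ let $p_k=L_Ng_k$. Then there exists $\mathbf c_k^{\mathrm{int}}\in\mathbb C^{N+1}$ with $p_k=\mathcal L_N^{(T)}(\mathbf c_k^{\mathrm{int}})$, and \[ \|g_k-Q_{N,\epsilon}^{(T)}g_k\|_{L^2(\Lambda)}\le \|g_k-p_k\|_{L^2(\Lambda)}+\epsilon\|\mathbf c_k^{\mathrm{int}}\|_2\le \sqrt2\,\frac{h_I^{\,N+1}}{N^{\,N+1}}C_f+\epsilon\|\mathbf c_k^{\mathrm{int}}\|_2 . \] Consequently, \[ \|f-\mathcal P_{N,K}^{T,\epsilon}f\|_{L^2(I)}^2\le\sum_{k=1}^K s_k\Big(\sqrt2\,\frac{h_I^{\,N+1}}{N^{\,N+1}}C_f+\epsilon\|\mathbf c_k^{\mathrm{int}}\|_2\Big)^2 . \]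
   Context: $I=[a,b]$ with partition $a=a_0<\cdots<a_K=b$, $I_k=[a_{k-1},a_k]$, $c_k=\frac{a_{k-1}+a_k}{2}$, $s_k=\frac{a_k-a_{k-1}}{2}$, $\Lambda=[-1,1]$, $g_k(t)=f(c_k+s_kt)$ for $t\in\Lambda$. $L_Ng_k$ denotes the polynomial of degree at most $N$ interpolating $g_k$ at the equispaced nodes $t_j=-1+2j/N$, $j=0,\dots,N$. Fix $T>1$ and $\epsilon>0$. With $\{p_\ell\}$ the $L^2([-1,1])$-orthonormal Legendre polynomials, $P_\ell^{(T)}(t)=T^{-1/2}p_\ell(t/T)$, the synthesis operator is $\mathcal L_N^{(T)}:\mathbb C^{N+1}\to L^2(\Lambda)$, $\mathcal L_N^{(T)}(\mathbf c)=\sum_{\ell=0}^Nc_\ell P_\ell^{(T)}|_\Lambda$, with SVD $\mathcal L_N^{(T)}\mathbf c=\sum_j\sigma_j(v_j^*\mathbf c)u_j$ ($\sigma_j>0$, $\{v_j\}$ orthonormal in $\mathbb C^{N+1}$, $\{u_j\}$ orthonormal in $L^2(\Lambda)$). The TSVD operator is $Q_{N,\epsilon}^{(T)}g=\sum_{j:\sigma_j>\epsilon}\sigma_j^{-1}\langle g,u_j\rangle\,\mathcal L_N^{(T)}(v_j)$, and $(\mathcal P_{N,K}^{T,\epsilon}f)(x)=(Q_{N,\epsilon}^{(T)}g_k)\big(\frac{x-c_k}{s_k}\big)$ for $x\in I_k$. *)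

theory Defs
  imports "HOL-Analysis.Analysis"
begin

fun legendre :: "nat \<Rightarrow> real \<Rightarrow> real" where
  "legendre 0 x = 1"
| "legendre (Suc 0) x = x"
| "legendre (Suc (Suc n)) x =
     ((2 * real n + 3) * x * legendre (Suc n) x - (real n + 1) * legendre n x) / (real n + 2)"

text \<open>L2([-1,1])-orthonormal Legendre polynomials p_l.\<close>
definition legendre_on :: "nat \<Rightarrow> real \<Rightarrow> real" where
  "legendre_on l x = sqrt ((2 * real l + 1) / 2) * legendre l x"

definition legendre_T :: "real \<Rightarrow> nat \<Rightarrow> real \<Rightarrow> real" where
  "legendre_T T l t = legendre_on l (t / T) / sqrt T"

text \<open>Synthesis operator: coefficient vectors in C^(N+1) are represented as
  functions nat => complex, only indices 0..N being used.\<close>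
definition synth :: "nat \<Rightarrow> real \<Rightarrow> (nat \<Rightarrow> complex) \<Rightarrow> real \<Rightarrow> complex" where
  "synth N T c t = (\<Sum>l\<le>N. c l * complex_of_real (legendre_T T l t))"

definition vinner :: "nat \<Rightarrow> (nat \<Rightarrow> complex) \<Rightarrow> (nat \<Rightarrow> complex) \<Rightarrow> complex" where
  "vinner N x y = (\<Sum>l\<le>N. x l * cnj (y l))"

definition vnorm :: "nat \<Rightarrow> (nat \<Rightarrow> complex) \<Rightarrow> real" where
  "vnorm N x = sqrt (\<Sum>l\<le>N. (cmod (x l))\<^sup>2)"

text \<open>Inner product and norm of L2(Lambda), Lambda = [-1,1].\<close>
definition l2_inner :: "(real \<Rightarrow> complex) \<Rightarrow> (real \<Rightarrow> complex) \<Rightarrow> complex" where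
  "l2_inner g h = integral {-1..1} (\<lambda>t. g t * cnj (h t))"

definition l2_norm :: "(real \<Rightarrow> complex) \<Rightarrow> real" where
  "l2_norm g = sqrt (integral {-1..1} (\<lambda>t. (cmod (g t))\<^sup>2))"

definition is_svd :: "nat \<Rightarrow> real \<Rightarrow> nat \<Rightarrow> (nat \<Rightarrow> real) \<Rightarrow> (nat \<Rightarrow> nat \<Rightarrow> complex)
    \<Rightarrow> (nat \<Rightarrow> real \<Rightarrow> complex) \<Rightarrow> bool" where
  "is_svd N T r \<sigma> v u \<longleftrightarrow>
     (\<forall>j<r. \<sigma> j > 0) \<and>
     (\<forall>i<r. \<forall>j<r. vinner N (v i) (v j) = (if i = j then 1 else 0)) \<and>
     (\<forall>i<r. \<forall>j<r. l2_inner (u i) (u j) = (if i = j then 1 else 0)) \<and>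
     (\<forall>c. \<forall>t\<in>{-1..1}.
        synth N T c t = (\<Sum>j<r. complex_of_real (\<sigma> j) * vinner N c (v j) * u j t))"

definition tsvd :: "nat \<Rightarrow> real \<Rightarrow> real \<Rightarrow> nat \<Rightarrow> (nat \<Rightarrow> real) \<Rightarrow> (nat \<Rightarrow> nat \<Rightarrow> complex)
    \<Rightarrow> (nat \<Rightarrow> real \<Rightarrow> complex) \<Rightarrow> (real \<Rightarrow> complex) \<Rightarrow> real \<Rightarrow> complex" where
  "tsvd N T eps r \<sigma> v u g t =
     (\<Sum>j\<in>{j. j < r \<and> \<sigma> j > eps}.
        complex_of_real (1 / \<sigma> j) * l2_inner g (u j) * synth N T (v j) t)"

definition node :: "nat \<Rightarrow> nat \<Rightarrow> real" where
  "node N j = -1 + 2 * real j / real N"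

definition interp :: "nat \<Rightarrow> (real \<Rightarrow> complex) \<Rightarrow> real \<Rightarrow> complex" where
  "interp N g t = (\<Sum>j\<le>N. g (node N j) *
      complex_of_real (\<Prod>i\<in>{..N} - {j}. (t - node N i) / (node N j - node N i)))"

definition mid :: "(nat \<Rightarrow> real) \<Rightarrow> nat \<Rightarrow> real" where
  "mid a k = (a (k - 1) + a k) / 2"

definition half :: "(nat \<Rightarrow> real) \<Rightarrow> nat \<Rightarrow> real" where
  "half a k = (a k - a (k - 1)) / 2"

definition loc :: "(real \<Rightarrow> complex) \<Rightarrow> (nat \<Rightarrow> real) \<Rightarrow> nat \<Rightarrow> real \<Rightarrow> complex" where
  "loc f a k t = f (mid a k + half a k * t)"

text \<open>Piecewise approximation P_{N,K}^{T,eps} f; on a shared breakpoint the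
  left subinterval is used (a null set, irrelevant for the L2 norm).\<close>
definition piecewise_approx :: "nat \<Rightarrow> real \<Rightarrow> real \<Rightarrow> nat \<Rightarrow> (nat \<Rightarrow> real)
    \<Rightarrow> (nat \<Rightarrow> nat \<Rightarrow> complex) \<Rightarrow> (nat \<Rightarrow> real \<Rightarrow> complex) \<Rightarrow> (real \<Rightarrow> complex)
    \<Rightarrow> (nat \<Rightarrow> real) \<Rightarrow> real \<Rightarrow> complex" where
  "piecewise_approx N T eps r \<sigma> v u f a x =
     (let k = (LEAST k. 1 \<le> k \<and> x \<le> a k)
      in tsvd N T eps r \<sigma> v u (loc f a k) ((x - mid a k) / half a k))"

end

(* On each subinterval the interpolant L_N g_k is a polynomial of degree at most N, and the
   scaled Legendre functions P_l^(T) have exact degree l, so L_N g_k = L_N^(T) c_k for some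
   coefficient vector c_k.  Writing L_N^(T) c = sum_j sigma_j <c, v_j> u_j and d = g - L_N^(T) c,
   the TSVD residual splits as

     g - Q g = (d - P d) + sum_{sigma_j <= eps} sigma_j <c, v_j> u_j,

   where P is the orthogonal projection onto the u_j with sigma_j > eps.  Bessel's inequality
   bounds the first term by ||d||, and Bessel's inequality for the v_j bounds the second by
   eps ||c||.  The classical remainder formula, from N + 1 applications of Rolle's theorem,
   bounds the interpolation error pointwise by (2 s_k / N)^(N+1) C_f <= (h_I / N)^(N+1) C_f, and
   integrating over Lambda gives the factor sqrt 2.  Finally, the substitution x = c_k + s_k t
   turns the squared global error into sum_k s_k ||g_k - Q g_k||^2. *)

theory Submission
  imports Defs "HOL-Computational_Algebra.Polynomial"
begin

section \<open>Interpolants lie in the range of the synthesis operator\<close>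

fun legendre_poly :: "nat \<Rightarrow> real poly" where
  "legendre_poly 0 = 1"
| "legendre_poly (Suc 0) = [:0, 1:]"
| "legendre_poly (Suc (Suc n)) = smult (1 / (real n + 2))
     (smult (2 * real n + 3) ([:0, 1:] * legendre_poly (Suc n)) - smult (real n + 1) (legendre_poly n))"

lemma poly_legendre_poly: "poly (legendre_poly n) x = legendre n x"
  by (induction n rule: legendre_poly.induct) (simp_all add: field_simps)

lemma degree_legendre_poly_le_coeff_pos:
  "degree (legendre_poly n) \<le> n \<and> coeff (legendre_poly n) n > 0"
proof (induction n rule: legendre_poly.induct)
  case (3 n)
  have "degree ([:0, 1:] * legendre_poly (Suc n)) \<le> Suc (Suc n)"
    using degree_mult_le[of "[:0, 1:]" "legendre_poly (Suc n)"] "3.IH"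
    by (auto simp del: mult_pCons_left)
  then have "degree (legendre_poly (Suc (Suc n))) \<le> Suc (Suc n)"
    using 3 by (simp del: mult_pCons_left)
      (intro degree_smult_le[THEN order.trans] degree_diff_le;
       auto intro: order.trans[OF degree_smult_le])
  moreover have "coeff (legendre_poly n) (Suc (Suc n)) = 0"
    using 3 by (simp add: coeff_eq_0)
  then have "coeff (legendre_poly (Suc (Suc n))) (Suc (Suc n)) > 0"
    using 3 by (simp del: mult_pCons_left add: field_simps)
      (auto intro!: add_pos_nonneg mult_nonneg_nonneg)
  ultimately show ?case ..
qed simp_all

lemma degree_legendre_poly: "degree (legendre_poly n) = n"
  using degree_legendre_poly_le_coeff_pos[of n] le_degree[of "legendre_poly n" n] by fastforce

lemma legendre_poly_nonzero: "legendre_poly n \<noteq> 0"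
  using degree_legendre_poly_le_coeff_pos[of n] by auto

lemma poly_eq_sum_triangular_basis:
  fixes B :: "nat \<Rightarrow> 'a::field poly"
  assumes "\<And>l. l \<le> N \<Longrightarrow> degree (B l) = l" and "\<And>l. l \<le> N \<Longrightarrow> B l \<noteq> 0"
    and "degree q \<le> N"
  shows "\<exists>c. q = (\<Sum>l\<le>N. smult (c l) (B l))"
  using assms
proof (induction N arbitrary: q)
  case 0
  then show ?case
    by (intro exI[of _ "\<lambda>_. coeff q 0 / coeff (B 0) 0"]) (auto elim!: degree_eq_zeroE)
next
  case (Suc N)
  have lc: "coeff (B (Suc N)) (Suc N) \<noteq> 0"
    using Suc.prems(1,2)[of "Suc N"] leading_coeff_0_iff by fastforce
  define \<alpha> where "\<alpha> = coeff q (Suc N) / coeff (B (Suc N)) (Suc N)"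
  have "degree (q - smult \<alpha> (B (Suc N))) \<le> N"
  proof (rule degree_le, intro allI impI)
    fix i assume "N < i"
    then consider "i = Suc N" | "Suc N < i" by linarith
    then show "coeff (q - smult \<alpha> (B (Suc N))) i = 0"
      by cases (use Suc.prems lc in \<open>auto simp: \<alpha>_def coeff_eq_0\<close>)
  qed
  then obtain c where c: "q - smult \<alpha> (B (Suc N)) = (\<Sum>l\<le>N. smult (c l) (B l))"
    using Suc.IH Suc.prems(1,2) by (metis le_SucI)
  show ?case
  proof (intro exI[of _ "c(Suc N := \<alpha>)"])
    have "(\<Sum>l\<le>N. smult ((c(Suc N := \<alpha>)) l) (B l)) = (\<Sum>l\<le>N. smult (c l) (B l))"
      by (intro sum.cong) auto
    then show "q = (\<Sum>l\<le>Suc N. smult ((c(Suc N := \<alpha>)) l) (B l))"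
      by (simp add: c[symmetric])
  qed
qed

definition scaled_legendre_poly :: "real \<Rightarrow> nat \<Rightarrow> complex poly" where
  "scaled_legendre_poly T l = map_poly of_real
     (smult (sqrt ((2 * real l + 1) / 2) / sqrt T) (legendre_poly l \<circ>\<^sub>p [:0, 1 / T:]))"

lemma poly_map_poly_of_real: "poly (map_poly of_real p) (of_real x) = of_real (poly p x)"
  by (induction p) (auto simp: map_poly_pCons)

lemma poly_scaled_legendre_poly:
  "poly (scaled_legendre_poly T l) (of_real t) = of_real (legendre_T T l t)"
  by (simp add: scaled_legendre_poly_def poly_map_poly_of_real poly_pcompose poly_legendre_poly
      legendre_T_def legendre_on_def)

lemma scaled_legendre_poly_degree_nonzero:
  assumes "T > 0"
  shows "degree (scaled_legendre_poly T l) = l" and "scaled_legendre_poly T l \<noteq> 0"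
proof -
  have "legendre_poly l \<circ>\<^sub>p [:0, 1 / T:] \<noteq> 0"
    using assms legendre_poly_nonzero[of l] pcompose_eq_0[of "legendre_poly l" "[:0, 1 / T:]"]
    by auto
  then show "degree (scaled_legendre_poly T l) = l" "scaled_legendre_poly T l \<noteq> 0"
    using assms map_poly_eq_0_iff[of complex_of_real]
    by (simp_all add: scaled_legendre_poly_def degree_map_poly degree_pcompose degree_legendre_poly)
qed

lemma poly_in_range_synth:
  assumes "T > 0" and "degree P \<le> N"
  shows "\<exists>c. \<forall>t. poly P (of_real t) = synth N T c t"
proof -
  obtain c where "P = (\<Sum>l\<le>N. smult (c l) (scaled_legendre_poly T l))"
    using poly_eq_sum_triangular_basis[OF scaled_legendre_poly_degree_nonzero[OF assms(1)]]
      assms(2) by blast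
  then have "poly P (of_real t) = synth N T c t" for t
    by (simp add: poly_sum poly_scaled_legendre_poly synth_def)
  then show ?thesis by blast
qed

definition lagrange_basis :: "nat \<Rightarrow> nat \<Rightarrow> real poly" where
  "lagrange_basis N j = (\<Prod>i\<in>{..N} - {j}. smult (1 / (node N j - node N i)) [:- node N i, 1:])"

lemma poly_lagrange_basis:
  "poly (lagrange_basis N j) t = (\<Prod>i\<in>{..N} - {j}. (t - node N i) / (node N j - node N i))"
  unfolding lagrange_basis_def poly_prod by (simp add: diff_divide_distrib)

lemma degree_lagrange_basis:
  assumes "j \<le> N"
  shows "degree (lagrange_basis N j) \<le> N"
proof -
  have linear: "degree (smult c [:- x, 1:]) \<le> 1" for c x :: real
    by (rule order.trans[OF degree_smult_le]) simp
  have "degree (lagrange_basis N j)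
      \<le> (\<Sum>i\<in>{..N} - {j}. degree (smult (1 / (node N j - node N i)) [:- node N i, 1:]))"
    unfolding lagrange_basis_def by (rule degree_prod_sum_le[unfolded o_def]) simp
  also have "\<dots> \<le> (\<Sum>i\<in>{..N} - {j}. 1)"
    by (rule sum_mono) (rule linear)
  also have "\<dots> = N"
    using assms by (simp add: card_Diff_singleton)
  finally show ?thesis .
qed

lemma interp_eq_lagrange_basis:
  "interp N g t = (\<Sum>j\<le>N. g (node N j) * of_real (poly (lagrange_basis N j) t))"
  by (simp add: interp_def poly_lagrange_basis)

lemma interp_in_range_synth:
  assumes "T > 0"
  shows "\<exists>c. \<forall>t. interp N g t = synth N T c t"
proof -
  define P where "P = (\<Sum>j\<le>N. smult (g (node N j)) (map_poly of_real (lagrange_basis N j)))"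
  have "degree P \<le> N"
    unfolding P_def using degree_lagrange_basis
    by (intro degree_sum_le) (auto intro: order.trans[OF degree_smult_le] simp: degree_map_poly)
  moreover have "interp N g t = poly P (of_real t)" for t
    by (simp add: P_def interp_eq_lagrange_basis poly_sum poly_map_poly_of_real)
  ultimately show ?thesis
    using poly_in_range_synth[OF assms] by metis
qed

section \<open>The interpolation remainder\<close>

lemma strict_mono_on_atMostI:
  fixes z :: "nat \<Rightarrow> 'a::order"
  assumes "\<And>k. k < n \<Longrightarrow> z k < z (Suc k)"
  shows "strict_mono_on {..n} z"
proof (rule strict_mono_onI)
  fix i j :: nat assume "i \<in> {..n}" "j \<in> {..n}" "i < j"
  then show "z i < z j"
  proof (induction j)
    case (Suc j)
    then show ?case
      using assms[of j] by (cases "i = j") (auto intro: order.strict_trans)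
  qed simp
qed

lemma Rolle_has_real_derivative:
  fixes f f' :: "real \<Rightarrow> real"
  assumes "a < b" "f a = f b" "continuous_on {a..b} f"
    and "\<And>x. a < x \<Longrightarrow> x < b \<Longrightarrow> (f has_real_derivative f' x) (at x)"
  shows "\<exists>x. a < x \<and> x < b \<and> f' x = 0"
proof -
  obtain x where "a < x" "x < b" "(*) (f' x) = (\<lambda>v. 0)"
    using Rolle_deriv[of a b f "\<lambda>x. (*) (f' x)"] assms by (auto simp: has_field_derivative_def)
  then show ?thesis
    by (metis mult.right_neutral)
qed

lemma Rolle_between_zeros:
  fixes F :: "nat \<Rightarrow> real \<Rightarrow> real" and z :: "nat \<Rightarrow> real"
  assumes z: "strict_mono_on {..Suc n} z"
    and zero: "\<And>i. i \<le> Suc n \<Longrightarrow> F 0 (z i) = 0"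
    and cont: "continuous_on {z 0..z (Suc n)} (F 0)"
    and der: "\<And>x. z 0 < x \<Longrightarrow> x < z (Suc n) \<Longrightarrow> (F 0 has_real_derivative F 1 x) (at x)"
  obtains w where "strict_mono_on {..n} w"
    and "\<And>i. i \<le> n \<Longrightarrow> z i < w i \<and> w i < z (Suc i) \<and> F 1 (w i) = 0"
proof -
  have "\<exists>w. z i < w \<and> w < z (Suc i) \<and> F 1 w = 0" if i: "i \<le> n" for i
  proof (rule Rolle_has_real_derivative)
    have "z 0 \<le> z i" "z (Suc i) \<le> z (Suc n)"
      using i by (auto intro!: strict_mono_on_leD[OF z])
    then show "continuous_on {z i..z (Suc i)} (F 0)"
      "\<And>x. z i < x \<Longrightarrow> x < z (Suc i) \<Longrightarrow> (F 0 has_real_derivative F 1 x) (at x)"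
      using cont der by (auto elim!: continuous_on_subset)
  qed (use i z zero in \<open>auto intro: strict_mono_onD\<close>)
  then obtain w where w: "\<And>i. i \<le> n \<Longrightarrow> z i < w i \<and> w i < z (Suc i) \<and> F 1 (w i) = 0"
    by metis
  have mono: "strict_mono_on {..n} w"
  proof (rule strict_mono_onI)
    fix i j assume "i \<in> {..n}" "j \<in> {..n}" "i < j"
    then have "w i < z (Suc i)" "z (Suc i) \<le> z j" "z j < w j"
      using w[of i] w[of j] by (auto intro!: strict_mono_on_leD[OF z])
    then show "w i < w j" by linarith
  qed
  from mono w show thesis by (rule that)
qed

lemma higher_order_Rolle:
  fixes F :: "nat \<Rightarrow> real \<Rightarrow> real" and z :: "nat \<Rightarrow> real"
  assumes "strict_mono_on {..Suc n} z"
    and "\<And>i. i \<le> Suc n \<Longrightarrow> F 0 (z i) = 0"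
    and "\<And>m. m \<le> n \<Longrightarrow> continuous_on {z 0..z (Suc n)} (F m)"
    and "\<And>m x. m \<le> n \<Longrightarrow> z 0 < x \<Longrightarrow> x < z (Suc n) \<Longrightarrow> (F m has_real_derivative F (Suc m) x) (at x)"
  shows "\<exists>\<xi>. z 0 < \<xi> \<and> \<xi> < z (Suc n) \<and> F (Suc n) \<xi> = 0"
  using assms
proof (induction n arbitrary: F z)
  case 0
  then show ?case
    by (intro Rolle_has_real_derivative) (auto intro: strict_mono_onD)
next
  case (Suc n)
  obtain w where w: "strict_mono_on {..Suc n} w"
    and between: "\<And>i. i \<le> Suc n \<Longrightarrow> z i < w i \<and> w i < z (Suc i) \<and> F 1 (w i) = 0"
    using Rolle_between_zeros[of "Suc n" z F] Suc.prems by (metis One_nat_def le0)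
  have "z 0 < w 0" "w (Suc n) < z (Suc (Suc n))"
    using between by auto
  then have sub: "{w 0..w (Suc n)} \<subseteq> {z 0..z (Suc (Suc n))}"
    by auto
  have "\<exists>\<xi>. w 0 < \<xi> \<and> \<xi> < w (Suc n) \<and> F (Suc (Suc n)) \<xi> = 0"
  proof (rule Suc.IH[of w "\<lambda>m. F (Suc m)"])
    show "strict_mono_on {..Suc n} w" by (fact w)
    show "F (Suc 0) (w i) = 0" if "i \<le> Suc n" for i
      using between[OF that] by simp
    show "continuous_on {w 0..w (Suc n)} (F (Suc m))" if "m \<le> n" for m
      using Suc.prems(3)[of "Suc m"] that sub by (auto elim: continuous_on_subset)
    show "(F (Suc m) has_real_derivative F (Suc (Suc m)) x) (at x)"
      if "m \<le> n" "w 0 < x" "x < w (Suc n)" for m x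
      using Suc.prems(4)[of "Suc m" x] that \<open>z 0 < w 0\<close> \<open>w (Suc n) < z (Suc (Suc n))\<close> by auto
  qed
  with \<open>z 0 < w 0\<close> \<open>w (Suc n) < z (Suc (Suc n))\<close> show ?case
    by (meson order.strict_trans)
qed

lemma poly_higher_pderiv_top:
  fixes p :: "real poly"
  assumes "degree p \<le> n"
  shows "poly ((pderiv ^^ n) p) x = fact n * coeff p n"
proof -
  have "degree ((pderiv ^^ n) p) = 0"
    using assms by (simp add: degree_higher_pderiv)
  then have "poly ((pderiv ^^ n) p) x = coeff ((pderiv ^^ n) p) 0"
    by (auto elim: degree_eq_zeroE)
  then show ?thesis
    by (simp add: coeff_higher_pderiv pochhammer_fact)
qed

definition node_poly :: "(nat \<Rightarrow> real) \<Rightarrow> nat \<Rightarrow> real poly" where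
  "node_poly x N = (\<Prod>j\<le>N. [:- x j, 1:])"

lemma poly_node_poly: "poly (node_poly x N) t = (\<Prod>j\<le>N. t - x j)"
  by (simp add: node_poly_def poly_prod)

lemma degree_node_poly: "degree (node_poly x N) = Suc N"
  unfolding node_poly_def by (subst degree_prod_eq_sum_degree) auto

lemma coeff_node_poly_top: "coeff (node_poly x N) (Suc N) = 1"
  using lead_coeff_prod[of "\<lambda>j. [:- x j, 1:]" "{..N}"]
  by (simp add: node_poly_def degree_node_poly[unfolded node_poly_def])

lemma strict_mono_on_insert_point:
  fixes x :: "nat \<Rightarrow> real"
  assumes x: "strict_mono_on {..N} x" and t: "t \<in> {x 0..x N}" and not_node: "\<And>j. j \<le> N \<Longrightarrow> t \<noteq> x j"
  obtains z where "strict_mono_on {..Suc N} z" "z 0 = x 0" "z (Suc N) = x N"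
    "z ` {..Suc N} \<subseteq> insert t (x ` {..N})"
proof -
  have "x 0 < t" "t < x N"
    using t not_node[of 0] not_node[of N] by auto
  define k where "k = (LEAST k. t < x k)"
  have "t < x k"
    unfolding k_def using \<open>t < x N\<close> by (rule LeastI)
  have "k \<le> N"
    unfolding k_def using \<open>t < x N\<close> by (rule Least_le)
  have "k \<noteq> 0"
    using \<open>t < x k\<close> \<open>x 0 < t\<close> by (metis order.asym)
  have "\<not> t < x (k - 1)"
    unfolding k_def by (rule not_less_Least) (use \<open>k \<noteq> 0\<close> k_def in auto)
  moreover have "t \<noteq> x (k - 1)"
    using not_node \<open>k \<le> N\<close> by simp
  ultimately have "x (k - 1) < t"
    by simp
  define z where "z i = (if i < k then x i else if i = k then t else x (i - 1))" for i
  have "strict_mono_on {..Suc N} z"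
  proof (rule strict_mono_on_atMostI)
    fix i assume "i < Suc N"
    then consider "Suc i < k" | "Suc i = k" | "i = k" | "k < i"
      by linarith
    then show "z i < z (Suc i)"
      by cases (use \<open>x (k - 1) < t\<close> \<open>t < x k\<close> \<open>i < Suc N\<close> \<open>k \<le> N\<close> in
          \<open>auto simp: z_def intro!: strict_mono_onD[OF x]\<close>)
  qed
  moreover have "z 0 = x 0" "z (Suc N) = x N"
    using \<open>k \<noteq> 0\<close> \<open>k \<le> N\<close> by (auto simp: z_def)
  moreover have "z ` {..Suc N} \<subseteq> insert t (x ` {..N})"
    using \<open>k \<le> N\<close> by (auto simp: z_def)
  ultimately show thesis
    by (rule that)
qed

lemma interpolation_remainder_off_nodes:
  fixes x :: "nat \<Rightarrow> real" and g :: "nat \<Rightarrow> real \<Rightarrow> real" and p :: "real poly"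
  assumes x: "strict_mono_on {..N} x"
    and p: "degree p \<le> N" "\<And>j. j \<le> N \<Longrightarrow> poly p (x j) = g 0 (x j)"
    and cont: "\<And>m. m \<le> N \<Longrightarrow> continuous_on {x 0..x N} (g m)"
    and der: "\<And>m y. m \<le> N \<Longrightarrow> y \<in> {x 0<..<x N} \<Longrightarrow> (g m has_real_derivative g (Suc m) y) (at y)"
    and t: "t \<in> {x 0..x N}" and not_node: "\<And>j. j \<le> N \<Longrightarrow> t \<noteq> x j"
  shows "\<exists>\<xi>\<in>{x 0<..<x N}. g 0 t - poly p t = g (Suc N) \<xi> / fact (Suc N) * (\<Prod>j\<le>N. t - x j)"
proof -
  obtain z where z: "strict_mono_on {..Suc N} z" "z 0 = x 0" "z (Suc N) = x N"
    and z_nodes: "z ` {..Suc N} \<subseteq> insert t (x ` {..N})"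
    using strict_mono_on_insert_point[OF x t not_node] by blast
  define \<omega> where "\<omega> = node_poly x N"
  have "poly \<omega> t \<noteq> 0"
    using not_node by (auto simp: \<omega>_def poly_node_poly)
  \<comment> \<open>\<open>K\<close> is chosen so that \<open>F 0\<close> also vanishes at \<open>t\<close>, giving \<open>N + 2\<close> zeros.\<close>
  define K where "K = (g 0 t - poly p t) / poly \<omega> t"
  define F where "F m y = g m y - poly ((pderiv ^^ m) p) y - K * poly ((pderiv ^^ m) \<omega>) y" for m y
  have "F 0 (z i) = 0" if "i \<le> Suc N" for i
  proof -
    have "z i \<in> insert t (x ` {..N})"
      using z_nodes that by blast
    then show ?thesis
      using \<open>poly \<omega> t \<noteq> 0\<close> p(2) by (auto simp: F_def K_def \<omega>_def poly_node_poly)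
  qed
  moreover have "continuous_on {z 0..z (Suc N)} (F m)" if "m \<le> N" for m
    unfolding F_def z using cont[OF that] by (intro continuous_intros)
  moreover have "(F m has_real_derivative F (Suc m) y) (at y)"
    if "m \<le> N" "z 0 < y" "y < z (Suc N)" for m y
    unfolding F_def[abs_def] using der[of m y] that z
    by (auto intro!: derivative_eq_intros)
  ultimately obtain \<xi> where \<xi>: "z 0 < \<xi>" "\<xi> < z (Suc N)" "F (Suc N) \<xi> = 0"
    using higher_order_Rolle[OF z(1), of F] by blast
  have "poly ((pderiv ^^ Suc N) p) \<xi> = 0"
    using poly_higher_pderiv_top[of p "Suc N" \<xi>] p(1) coeff_eq_0[of p "Suc N"] by simp
  moreover have "poly ((pderiv ^^ Suc N) \<omega>) \<xi> = fact (Suc N)"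
    using poly_higher_pderiv_top[of \<omega> "Suc N" \<xi>]
    by (simp add: \<omega>_def degree_node_poly coeff_node_poly_top)
  ultimately have "K * fact (Suc N) = g (Suc N) \<xi>"
    using \<xi>(3) unfolding F_def by simp
  then have "K = g (Suc N) \<xi> / fact (Suc N)"
    by (simp add: eq_divide_eq del: fact_Suc)
  moreover have "g 0 t - poly p t = K * poly \<omega> t"
    using \<open>poly \<omega> t \<noteq> 0\<close> by (simp add: K_def)
  ultimately show ?thesis
    using \<xi> z by (auto simp: \<omega>_def poly_node_poly)
qed

theorem interpolation_remainder:
  fixes x :: "nat \<Rightarrow> real" and g :: "nat \<Rightarrow> real \<Rightarrow> real" and p :: "real poly"
  assumes x: "strict_mono_on {..N} x" and N: "N \<ge> 1"
    and p: "degree p \<le> N" "\<And>j. j \<le> N \<Longrightarrow> poly p (x j) = g 0 (x j)"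
    and cont: "\<And>m. m \<le> N \<Longrightarrow> continuous_on {x 0..x N} (g m)"
    and der: "\<And>m y. m \<le> N \<Longrightarrow> y \<in> {x 0<..<x N} \<Longrightarrow> (g m has_real_derivative g (Suc m) y) (at y)"
    and t: "t \<in> {x 0..x N}"
  shows "\<exists>\<xi>\<in>{x 0<..<x N}. g 0 t - poly p t = g (Suc N) \<xi> / fact (Suc N) * (\<Prod>j\<le>N. t - x j)"
proof (cases "\<exists>j\<le>N. t = x j")
  case True
  then obtain j where "j \<le> N" "t = x j"
    by blast
  then have "g 0 t - poly p t = 0" "(\<Prod>j\<le>N. t - x j) = 0"
    using p(2) by (auto simp: prod_zero_iff)
  moreover have "x 0 < x N"
    using N by (intro strict_mono_onD[OF x]) auto
  then have "(x 0 + x N) / 2 \<in> {x 0<..<x N}"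
    by auto
  ultimately show ?thesis
    by (metis mult_zero_right)
qed (use interpolation_remainder_off_nodes[OF x p cont der t] in blast)

lemma strict_mono_node: "N \<ge> 1 \<Longrightarrow> strict_mono (node N)"
  by (rule strict_monoI) (simp add: node_def divide_strict_right_mono)

lemma interp_node:
  assumes "N \<ge> 1" "i \<le> N"
  shows "interp N g (node N i) = g (node N i)"
proof -
  have "poly (lagrange_basis N j) (node N i) = (if j = i then 1 else 0)" if "j \<le> N" for j
    using assms strict_mono_eq[OF strict_mono_node[OF assms(1)]]
    by (auto simp: poly_lagrange_basis prod_zero_iff intro!: prod.neutral)
  then have "interp N g (node N i) = (\<Sum>j\<le>N. if j = i then g (node N j) else 0)"
    unfolding interp_eq_lagrange_basis by (intro sum.cong) auto
  also have "\<dots> = g (node N i)"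
    using assms(2) by simp
  finally show ?thesis .
qed

lemma prod_abs_diff_le_fact:
  fixes y :: real
  assumes "0 \<le> y" "y \<le> real n"
  shows "(\<Prod>j\<le>n. \<bar>y - real j\<bar>) \<le> fact (Suc n)"
  using assms
proof (induction n arbitrary: y)
  case (Suc n)
  consider "y \<le> real n" | "1 \<le> y" | "n = 0" "y < 1"
    by linarith
  then show ?case
  proof cases
    case 1
    have "(\<Prod>j\<le>Suc n. \<bar>y - real j\<bar>) = (\<Prod>j\<le>n. \<bar>y - real j\<bar>) * \<bar>y - real (Suc n)\<bar>"
      by simp
    also have "\<dots> \<le> fact (Suc n) * real (Suc (Suc n))"
      using Suc.IH[of y] Suc.prems 1 by (intro mult_mono) (auto simp: prod_nonneg)
    finally show ?thesis
      by (simp add: algebra_simps)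
  next
    case 2
    have "(\<Prod>j\<le>Suc n. \<bar>y - real j\<bar>) = \<bar>y\<bar> * (\<Prod>j\<le>n. \<bar>(y - 1) - real j\<bar>)"
      by (subst prod.atMost_Suc_shift) (simp add: algebra_simps)
    also have "\<dots> \<le> real (Suc (Suc n)) * fact (Suc n)"
      using Suc.IH[of "y - 1"] Suc.prems 2 by (intro mult_mono) (auto simp: prod_nonneg)
    finally show ?thesis
      by (simp add: algebra_simps)
  next
    case 3
    then have "\<bar>y\<bar> * \<bar>y - 1\<bar> \<le> 1 * 1"
      using Suc.prems by (intro mult_mono) auto
    with 3 show ?thesis
      by simp
  qed
qed simp

lemma equispaced_node_poly_bound:
  assumes N: "N \<ge> 1" and t: "t \<in> {-1..1}"
  shows "\<bar>\<Prod>j\<le>N. t - node N j\<bar> \<le> (2 / real N) ^ Suc N * fact (Suc N)"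
proof -
  define y where "y = (t + 1) * real N / 2"
  have "t - node N j = 2 / real N * (y - real j)" for j
    using N by (simp add: node_def y_def field_simps)
  then have "(\<Prod>j\<le>N. t - node N j) = (\<Prod>j\<le>N. 2 / real N * (y - real j))"
    by presburger
  also have "\<dots> = (2 / real N) ^ Suc N * (\<Prod>j\<le>N. y - real j)"
    by (simp only: prod.distrib prod_constant card_atMost)
  finally have "\<bar>\<Prod>j\<le>N. t - node N j\<bar> = (2 / real N) ^ Suc N * (\<Prod>j\<le>N. \<bar>y - real j\<bar>)"
    by (simp add: abs_mult abs_prod)
  also have "\<dots> \<le> (2 / real N) ^ Suc N * fact (Suc N)"
    using t N by (intro mult_left_mono prod_abs_diff_le_fact) (auto simp: y_def)
  finally show ?thesis .
qed

lemma equispaced_interp_error_real: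
  fixes g :: "nat \<Rightarrow> real \<Rightarrow> real" and p :: "real poly"
  assumes N: "N \<ge> 1"
    and p: "degree p \<le> N" "\<And>j. j \<le> N \<Longrightarrow> poly p (node N j) = g 0 (node N j)"
    and cont: "\<And>m. m \<le> N \<Longrightarrow> continuous_on {-1..1} (g m)"
    and der: "\<And>m y. m \<le> N \<Longrightarrow> y \<in> {-1<..<1} \<Longrightarrow> (g m has_real_derivative g (Suc m) y) (at y)"
    and bound: "\<And>y. y \<in> {-1<..<1} \<Longrightarrow> \<bar>g (Suc N) y\<bar> \<le> M"
    and t: "t \<in> {-1..1}"
  shows "\<bar>g 0 t - poly p t\<bar> \<le> (2 / real N) ^ Suc N * M"
proof -
  have nodes: "node N 0 = -1" "node N N = 1"
    using N by (auto simp: node_def)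
  obtain \<xi> where \<xi>: "\<xi> \<in> {-1<..<1}"
    and remainder: "g 0 t - poly p t = g (Suc N) \<xi> / fact (Suc N) * (\<Prod>j\<le>N. t - node N j)"
    using interpolation_remainder[where x = "node N" and g = g and t = t,
        OF monotone_on_subset[OF strict_mono_node[OF N] subset_UNIV] N p] cont der t
    unfolding nodes by blast
  have "\<bar>g 0 t - poly p t\<bar> = \<bar>g (Suc N) \<xi>\<bar> / fact (Suc N) * \<bar>\<Prod>j\<le>N. t - node N j\<bar>"
    unfolding remainder by (simp add: abs_mult)
  also have "\<dots> \<le> M / fact (Suc N) * ((2 / real N) ^ Suc N * fact (Suc N))"
    using bound[OF \<xi>] equispaced_node_poly_bound[OF N t]
    by (intro mult_mono divide_right_mono) auto
  also have "\<dots> = (2 / real N) ^ Suc N * M"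
    by simp
  finally show ?thesis .
qed

lemma cnj_sgn_mult_self: "cnj (sgn z) * z = of_real (cmod z)"
proof (cases "z = 0")
  case False
  have "cnj (sgn z) * z = z * cnj z / of_real (cmod z)"
    by (simp add: sgn_eq)
  also have "\<dots> = of_real (cmod z)"
    using False by (simp flip: complex_norm_square add: power2_eq_square)
  finally show ?thesis .
qed simp

theorem interp_error_bound:
  fixes G :: "nat \<Rightarrow> real \<Rightarrow> complex"
  assumes N: "N \<ge> 1"
    and der: "\<And>m x. m \<le> N \<Longrightarrow> x \<in> {-1..1} \<Longrightarrow>
      (G m has_vector_derivative G (Suc m) x) (at x within {-1..1})"
    and bound: "\<And>x. x \<in> {-1<..<1} \<Longrightarrow> cmod (G (Suc N) x) \<le> M"
    and t: "t \<in> {-1..1}"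
  shows "cmod (G 0 t - interp N (G 0) t) \<le> (2 / real N) ^ Suc N * M"
proof -
  \<comment> \<open>Rotating by \<open>w\<close> makes the error at \<open>t\<close> real and nonnegative, so the real remainder
    formula applies to \<open>Re (w * G m)\<close>.\<close>
  define w where "w = cnj (sgn (G 0 t - interp N (G 0) t))"
  define g where "g m y = Re (w * G m y)" for m y
  define p where "p = (\<Sum>j\<le>N. smult (g 0 (node N j)) (lagrange_basis N j))"
  have poly_p: "poly p y = Re (w * interp N (G 0) y)" for y
    by (simp add: p_def g_def interp_eq_lagrange_basis poly_sum sum_distrib_left Re_sum
        algebra_simps)
  have "degree p \<le> N"
    unfolding p_def using degree_lagrange_basis
    by (intro degree_sum_le) (auto intro: order.trans[OF degree_smult_le])
  moreover have "poly p (node N j) = g 0 (node N j)" if "j \<le> N" for j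
    using interp_node[OF N that] by (simp add: poly_p g_def)
  moreover have "continuous_on {-1..1} (g m)" if "m \<le> N" for m
    unfolding g_def using der[OF that]
    by (intro continuous_intros continuous_on_vector_derivative) auto
  moreover have "(g m has_real_derivative g (Suc m) y) (at y)"
    if "m \<le> N" "y \<in> {-1<..<1}" for m y
  proof -
    have "(G m has_vector_derivative G (Suc m) y) (at y)"
      using der[OF that(1), of y] that(2) by (simp add: at_within_Icc_at)
    then show ?thesis
      unfolding g_def by (intro has_field_derivative_Re has_vector_derivative_mult_right)
  qed
  moreover have "\<bar>g (Suc N) y\<bar> \<le> M" if "y \<in> {-1<..<1}" for y
  proof -
    have "\<bar>g (Suc N) y\<bar> \<le> cmod w * cmod (G (Suc N) y)"
      unfolding g_def norm_mult[symmetric] by (rule abs_Re_le_cmod)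
    also have "\<dots> \<le> 1 * M"
      using bound[OF that] by (intro mult_mono) (auto simp: w_def norm_sgn)
    finally show ?thesis
      by simp
  qed
  ultimately have "\<bar>g 0 t - poly p t\<bar> \<le> (2 / real N) ^ Suc N * M"
    by (intro equispaced_interp_error_real[OF N _ _ _ _ _ t])
  moreover have "cmod (G 0 t - interp N (G 0) t) = g 0 t - poly p t"
    unfolding g_def poly_p w_def minus_complex.sel(1)[symmetric] right_diff_distrib[symmetric]
      cnj_sgn_mult_self
    by simp
  ultimately show ?thesis
    by simp
qed

section \<open>Semi-inner products and Bessel's inequality\<close>

lemma quadratic_nonneg_imp_discriminant:
  fixes a b c :: real
  assumes nonneg: "\<And>r. 0 \<le> a + 2 * b * r + c * r\<^sup>2" and "c \<ge> 0"
  shows "b\<^sup>2 \<le> a * c"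
proof (cases "c = 0")
  case True
  have "b = 0"
  proof (rule ccontr)
    assume "b \<noteq> 0"
    then have "a + 2 * b * (- (a + 1) / (2 * b)) + c * (- (a + 1) / (2 * b))\<^sup>2 = -1"
      using True by (simp add: field_simps)
    with nonneg show False
      by (metis neg_0_le_iff_le not_one_le_zero)
  qed
  with True show ?thesis
    by simp
next
  case False
  with \<open>c \<ge> 0\<close> have "0 \<le> (a + 2 * b * (- b / c) + c * (- b / c)\<^sup>2) * c"
    by (intro mult_nonneg_nonneg nonneg) simp
  also have "\<dots> = a * c - b\<^sup>2"
    using False by (simp add: field_simps power2_eq_square)
  finally show ?thesis
    by simp
qed

text \<open>Vectors are functions with pointwise operations, and the form is only assumed positive
  semidefinite: the \<open>L\<^sup>2(\<Lambda>)\<close> product on continuous functions on \<open>\<real>\<close> ignores all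
  values outside \<open>\<Lambda>\<close>.\<close>

locale semi_inner_product =
  fixes V :: "('a \<Rightarrow> complex) set" and ip :: "('a \<Rightarrow> complex) \<Rightarrow> ('a \<Rightarrow> complex) \<Rightarrow> complex"
  assumes add_mem: "x \<in> V \<Longrightarrow> y \<in> V \<Longrightarrow> (\<lambda>t. x t + y t) \<in> V"
    and scale_mem: "x \<in> V \<Longrightarrow> (\<lambda>t. c * x t) \<in> V"
    and zero_mem: "(\<lambda>t. 0) \<in> V"
    and ip_add_left: "x \<in> V \<Longrightarrow> y \<in> V \<Longrightarrow> z \<in> V \<Longrightarrow> ip (\<lambda>t. x t + y t) z = ip x z + ip y z"
    and ip_scale_left: "x \<in> V \<Longrightarrow> z \<in> V \<Longrightarrow> ip (\<lambda>t. c * x t) z = c * ip x z"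
    and ip_cnj: "x \<in> V \<Longrightarrow> y \<in> V \<Longrightarrow> ip y x = cnj (ip x y)"
    and ip_self_nonneg: "x \<in> V \<Longrightarrow> 0 \<le> Re (ip x x)"
begin

definition nrm :: "('a \<Rightarrow> complex) \<Rightarrow> real" where
  "nrm x = sqrt (Re (ip x x))"

lemma nrm_nonneg: "x \<in> V \<Longrightarrow> 0 \<le> nrm x"
  by (simp add: nrm_def ip_self_nonneg)

lemma nrm_square: "x \<in> V \<Longrightarrow> (nrm x)\<^sup>2 = Re (ip x x)"
  using ip_self_nonneg[of x] by (simp add: nrm_def)

lemma uminus_mem: "y \<in> V \<Longrightarrow> (\<lambda>t. - y t) \<in> V"
  using scale_mem[of y "-1"] by simp

lemma diff_mem: "x \<in> V \<Longrightarrow> y \<in> V \<Longrightarrow> (\<lambda>t. x t - y t) \<in> V"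
  using add_mem[of x "\<lambda>t. - y t"] uminus_mem[of y] by simp

lemma sum_mem: "finite S \<Longrightarrow> (\<And>j. j \<in> S \<Longrightarrow> e j \<in> V) \<Longrightarrow> (\<lambda>t. \<Sum>j\<in>S. c j * e j t) \<in> V"
proof (induction S rule: finite_induct)
  case (insert j S)
  then have "(\<lambda>t. c j * e j t) \<in> V" "(\<lambda>t. \<Sum>i\<in>S. c i * e i t) \<in> V"
    by (auto intro: scale_mem)
  with insert.hyps show ?case
    using add_mem by simp
qed (simp add: zero_mem)

lemma ip_diff_left:
  assumes "x \<in> V" "y \<in> V" "z \<in> V"
  shows "ip (\<lambda>t. x t - y t) z = ip x z - ip y z"
  using ip_add_left[of x "\<lambda>t. - y t" z] ip_scale_left[of y z "-1"] assms uminus_mem[of y]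
  by simp

lemma ip_sum_left:
  assumes "finite S" "\<And>j. j \<in> S \<Longrightarrow> e j \<in> V" "z \<in> V"
  shows "ip (\<lambda>t. \<Sum>j\<in>S. c j * e j t) z = (\<Sum>j\<in>S. c j * ip (e j) z)"
  using assms
proof (induction S rule: finite_induct)
  case empty
  then show ?case
    using ip_scale_left[of "\<lambda>t. 0" z 0] zero_mem by simp
next
  case (insert j S)
  then show ?case
    by (simp add: ip_add_left ip_scale_left scale_mem sum_mem)
qed

lemma ip_scale_right: "x \<in> V \<Longrightarrow> z \<in> V \<Longrightarrow> ip z (\<lambda>t. c * x t) = cnj c * ip z x"
  by (metis complex_cnj_mult ip_cnj ip_scale_left scale_mem)

lemma ip_sum_right:
  assumes "finite S" "\<And>j. j \<in> S \<Longrightarrow> e j \<in> V" "z \<in> V"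
  shows "ip z (\<lambda>t. \<Sum>j\<in>S. c j * e j t) = (\<Sum>j\<in>S. cnj (c j) * ip z (e j))"
  using assms ip_cnj[OF sum_mem[OF assms(1,2)] assms(3)] ip_cnj[OF _ assms(3)]
  by (simp add: ip_sum_left cnj_sum)

lemma re_ip_add_self:
  assumes "x \<in> V" "y \<in> V"
  shows "Re (ip (\<lambda>t. x t + y t) (\<lambda>t. x t + y t)) = Re (ip x x) + 2 * Re (ip x y) + Re (ip y y)"
proof -
  have "ip z (\<lambda>t. x t + y t) = ip z x + ip z y" if "z \<in> V" for z
    using assms that ip_cnj[OF add_mem[OF assms] that] by (simp add: ip_add_left ip_cnj[of _ z])
  then have "ip (\<lambda>t. x t + y t) (\<lambda>t. x t + y t) = ip x x + ip x y + ip y x + ip y y"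
    using assms by (simp add: ip_add_left add_mem)
  moreover have "Re (ip y x) = Re (ip x y)"
    using ip_cnj[OF assms] by simp
  ultimately show ?thesis
    by simp
qed

lemma re_ip_le_nrm_mult:
  assumes "x \<in> V" "y \<in> V"
  shows "Re (ip x y) \<le> nrm x * nrm y"
proof -
  have "0 \<le> Re (ip x x) + 2 * Re (ip x y) * r + Re (ip y y) * r\<^sup>2" for r :: real
  proof -
    have "(\<lambda>t. of_real r * y t) \<in> V"
      using assms(2) by (rule scale_mem)
    then have "0 \<le> Re (ip (\<lambda>t. x t + of_real r * y t) (\<lambda>t. x t + of_real r * y t))"
      using assms by (intro ip_self_nonneg add_mem)
    also have "\<dots> = Re (ip x x) + 2 * Re (ip x y) * r + Re (ip y y) * r\<^sup>2"
      using assms \<open>(\<lambda>t. of_real r * y t) \<in> V\<close>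
      by (simp add: re_ip_add_self ip_scale_right ip_scale_left power2_eq_square)
    finally show ?thesis .
  qed
  then have "(Re (ip x y))\<^sup>2 \<le> Re (ip x x) * Re (ip y y)"
    using assms by (intro quadratic_nonneg_imp_discriminant ip_self_nonneg)
  then have "Re (ip x y) \<le> sqrt (Re (ip x x) * Re (ip y y))"
    by (rule real_le_rsqrt)
  then show ?thesis
    by (simp add: nrm_def real_sqrt_mult)
qed

lemma nrm_triangle:
  assumes "x \<in> V" "y \<in> V"
  shows "nrm (\<lambda>t. x t + y t) \<le> nrm x + nrm y"
proof -
  have "(nrm (\<lambda>t. x t + y t))\<^sup>2 = Re (ip x x) + 2 * Re (ip x y) + Re (ip y y)"
    using assms by (simp add: nrm_square add_mem re_ip_add_self)
  also have "\<dots> \<le> (nrm x + nrm y)\<^sup>2"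
    using assms re_ip_le_nrm_mult[OF assms] by (simp add: power2_sum nrm_square)
  finally show ?thesis
    by (rule power2_le_imp_le) (simp add: nrm_nonneg assms)
qed

definition orthonormal :: "'b set \<Rightarrow> ('b \<Rightarrow> 'a \<Rightarrow> complex) \<Rightarrow> bool" where
  "orthonormal S e \<longleftrightarrow> (\<forall>j\<in>S. e j \<in> V) \<and> (\<forall>i\<in>S. \<forall>j\<in>S. ip (e i) (e j) = (if i = j then 1 else 0))"

lemma orthonormal_subset: "orthonormal S e \<Longrightarrow> S' \<subseteq> S \<Longrightarrow> orthonormal S' e"
  unfolding orthonormal_def by blast

lemma orthonormal_ip_sum_left:
  assumes "orthonormal S e" "finite S" "i \<in> S"
  shows "ip (\<lambda>t. \<Sum>j\<in>S. c j * e j t) (e i) = c i"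
proof -
  have "ip (\<lambda>t. \<Sum>j\<in>S. c j * e j t) (e i) = (\<Sum>j\<in>S. c j * ip (e j) (e i))"
    using assms by (intro ip_sum_left) (auto simp: orthonormal_def)
  also have "\<dots> = (\<Sum>j\<in>S. if j = i then c j else 0)"
    using assms by (intro sum.cong) (auto simp: orthonormal_def)
  also have "\<dots> = c i"
    using assms by simp
  finally show ?thesis .
qed

lemma orthonormal_re_ip_sum:
  assumes "orthonormal S e" "finite S"
  shows "Re (ip (\<lambda>t. \<Sum>j\<in>S. c j * e j t) (\<lambda>t. \<Sum>j\<in>S. c j * e j t)) = (\<Sum>j\<in>S. (cmod (c j))\<^sup>2)"
proof -
  have "ip (\<lambda>t. \<Sum>j\<in>S. c j * e j t) (\<lambda>t. \<Sum>j\<in>S. c j * e j t) = (\<Sum>j\<in>S. cnj (c j) * c j)"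
    using assms
    by (simp add: ip_sum_right sum_mem orthonormal_ip_sum_left orthonormal_def cong: sum.cong)
  moreover have "Re (cnj z * z) = (cmod z)\<^sup>2" for z
    by (metis Re_complex_of_real complex_norm_square mult.commute)
  ultimately show ?thesis
    by (simp add: Re_sum)
qed

lemma Bessel_identity:
  assumes on: "orthonormal S e" and "finite S" and x: "x \<in> V"
  shows "Re (ip x x) = (nrm (\<lambda>t. x t - (\<Sum>j\<in>S. ip x (e j) * e j t)))\<^sup>2 + (\<Sum>j\<in>S. (cmod (ip x (e j)))\<^sup>2)"
proof -
  define P where "P = (\<lambda>t. \<Sum>j\<in>S. ip x (e j) * e j t)"
  define y where "y = (\<lambda>t. x t - P t)"
  have e: "\<And>j. j \<in> S \<Longrightarrow> e j \<in> V"
    using on by (simp add: orthonormal_def)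
  have P: "P \<in> V"
    unfolding P_def using assms(2) e by (rule sum_mem)
  have y: "y \<in> V"
    unfolding y_def using x P by (rule diff_mem)
  have "ip y (e j) = 0" if "j \<in> S" for j
    using assms e that P orthonormal_ip_sum_left[OF on \<open>finite S\<close> that, of "\<lambda>j. ip x (e j)"]
    by (simp add: y_def ip_diff_left P_def)
  then have "ip y P = 0"
    using assms e y by (simp add: P_def ip_sum_right)
  have "x = (\<lambda>t. y t + P t)"
    by (simp add: y_def)
  then have "Re (ip x x) = Re (ip y y) + 2 * Re (ip y P) + Re (ip P P)"
    using re_ip_add_self[OF y P] by simp
  also have "\<dots> = (nrm y)\<^sup>2 + (\<Sum>j\<in>S. (cmod (ip x (e j)))\<^sup>2)"
    using assms \<open>ip y P = 0\<close> y by (simp add: P_def orthonormal_re_ip_sum nrm_square)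
  finally show ?thesis
    by (simp add: y_def P_def)
qed

lemma Bessel_inequality:
  assumes "orthonormal S e" "finite S" "x \<in> V"
  shows "(\<Sum>j\<in>S. (cmod (ip x (e j)))\<^sup>2) \<le> Re (ip x x)"
  using Bessel_identity[OF assms] by simp

lemma nrm_sub_projection_le:
  assumes "orthonormal S e" "finite S" "x \<in> V"
  shows "nrm (\<lambda>t. x t - (\<Sum>j\<in>S. ip x (e j) * e j t)) \<le> nrm x"
proof -
  have "(nrm (\<lambda>t. x t - (\<Sum>j\<in>S. ip x (e j) * e j t)))\<^sup>2 \<le> (nrm x)\<^sup>2"
    using Bessel_identity[OF assms] assms(3) by (simp add: nrm_square sum_nonneg)
  then show ?thesis
    by (rule power2_le_imp_le) (simp add: nrm_nonneg assms)
qed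

lemma nrm_sub_partial_projection_le:
  assumes on: "orthonormal R e" and R: "finite R" "S \<subseteq> R" and g: "g \<in> V"
  shows "nrm (\<lambda>t. g t - (\<Sum>j\<in>S. ip g (e j) * e j t))
    \<le> nrm (\<lambda>t. g t - (\<Sum>j\<in>R. \<beta> j * e j t)) + sqrt (\<Sum>j\<in>R - S. (cmod (\<beta> j))\<^sup>2)"
proof -
  define p where "p = (\<lambda>t. \<Sum>j\<in>R. \<beta> j * e j t)"
  define d where "d = (\<lambda>t. g t - p t)"
  define q where "q = (\<lambda>t. \<Sum>j\<in>R - S. \<beta> j * e j t)"
  have e: "\<And>j. j \<in> R \<Longrightarrow> e j \<in> V"
    using on by (simp add: orthonormal_def)
  have p: "p \<in> V"
    unfolding p_def using R(1) e by (rule sum_mem)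
  have d: "d \<in> V"
    unfolding d_def using g p by (rule diff_mem)
  have q: "q \<in> V"
    unfolding q_def using R(1) e by (intro sum_mem) auto
  have "ip g (e j) = ip d (e j) + \<beta> j" if "j \<in> R" for j
  proof -
    have "g = (\<lambda>t. d t + p t)"
      by (simp add: d_def)
    then have "ip g (e j) = ip d (e j) + ip p (e j)"
      using d p e[OF that] by (simp add: ip_add_left)
    then show ?thesis
      unfolding p_def using on R(1) that by (simp add: orthonormal_ip_sum_left)
  qed
  then have "g t - (\<Sum>j\<in>S. ip g (e j) * e j t) = (d t - (\<Sum>j\<in>S. ip d (e j) * e j t)) + q t" for t
    using R by (simp add: subset_iff distrib_right sum.distrib d_def p_def q_def
        sum.subset_diff[of S R] algebra_simps cong: sum.cong)
  then have "nrm (\<lambda>t. g t - (\<Sum>j\<in>S. ip g (e j) * e j t))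
      = nrm (\<lambda>t. (d t - (\<Sum>j\<in>S. ip d (e j) * e j t)) + q t)"
    by presburger
  also have "\<dots> \<le> nrm (\<lambda>t. d t - (\<Sum>j\<in>S. ip d (e j) * e j t)) + nrm q"
    using d q R e by (intro nrm_triangle diff_mem sum_mem) (auto simp: finite_subset)
  also have "\<dots> \<le> nrm d + nrm q"
    using orthonormal_subset[OF on R(2)] finite_subset[OF R(2,1)] d
    by (simp add: nrm_sub_projection_le)
  also have "nrm q = sqrt (\<Sum>j\<in>R - S. (cmod (\<beta> j))\<^sup>2)"
    unfolding nrm_def q_def using orthonormal_subset[OF on] R(1)
    by (simp add: orthonormal_re_ip_sum)
  finally show ?thesis
    by (simp add: d_def p_def)
qed

end

section \<open>The TSVD error bound\<close>

lemma l2_inner_self: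
  assumes "continuous_on {-1..1} h"
  shows "l2_inner h h = of_real (integral {-1..1} (\<lambda>t. (cmod (h t))\<^sup>2))"
proof -
  have "(\<lambda>t. (cmod (h t))\<^sup>2) integrable_on {-1..1}"
    using assms by (intro integrable_continuous_interval continuous_intros)
  then show ?thesis
    unfolding l2_inner_def complex_norm_square[symmetric]
    by (intro integral_unique has_integral_of_real integrable_integral)
qed

interpretation L2: semi_inner_product "{h. continuous_on {-1..1} h}" l2_inner
proof
  fix x y z :: "real \<Rightarrow> complex" and c :: complex
  assume "x \<in> {h. continuous_on {-1..1} h}" "y \<in> {h. continuous_on {-1..1} h}"
    "z \<in> {h. continuous_on {-1..1} h}"
  then have cont: "continuous_on {-1..1} x" "continuous_on {-1..1} y" "continuous_on {-1..1} z"
    by auto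
  show "(\<lambda>t. x t + y t) \<in> {h. continuous_on {-1..1} h}" "(\<lambda>t. c * x t) \<in> {h. continuous_on {-1..1} h}"
    using cont by (auto intro: continuous_intros)
  show "l2_inner (\<lambda>t. x t + y t) z = l2_inner x z + l2_inner y z"
    unfolding l2_inner_def distrib_right
    using cont by (intro integral_add integrable_continuous_interval continuous_intros)
  show "l2_inner (\<lambda>t. c * x t) z = c * l2_inner x z"
    unfolding l2_inner_def by (simp add: mult.assoc)
  show "l2_inner y x = cnj (l2_inner x y)"
    unfolding l2_inner_def integral_cnj by (simp add: mult.commute)
  show "0 \<le> Re (l2_inner x x)"
    using cont by (simp add: l2_inner_self integral_nonneg integrable_continuous_interval continuous_intros)
qed simp

lemma l2_norm_eq_nrm: "continuous_on {-1..1} h \<Longrightarrow> l2_norm h = L2.nrm h"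
  by (simp add: l2_norm_def L2.nrm_def l2_inner_self)

lemma l2_norm_cong:
  assumes "\<And>t. t \<in> {-1..1} \<Longrightarrow> x t = x' t"
  shows "l2_norm x = l2_norm x'"
proof -
  have "integral {-1..1} (\<lambda>t. (cmod (x t))\<^sup>2) = integral {-1..1} (\<lambda>t. (cmod (x' t))\<^sup>2)"
    by (intro integral_cong) (simp add: assms)
  then show ?thesis
    by (simp add: l2_norm_def)
qed

lemma l2_norm_nonneg: "0 \<le> l2_norm h"
  unfolding l2_norm_def
  by (cases "(\<lambda>t. (cmod (h t))\<^sup>2) integrable_on {-1..1}")
    (simp_all add: integral_nonneg not_integrable_integral)

lemma l2_norm_le_sup:
  assumes "continuous_on {-1..1} h" and "\<And>t. t \<in> {-1..1} \<Longrightarrow> cmod (h t) \<le> b"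
  shows "l2_norm h \<le> sqrt 2 * b"
proof -
  have "cmod (h 0) \<le> b"
    by (rule assms(2)) simp
  then have "0 \<le> b"
    using norm_ge_zero[of "h 0"] by linarith
  have "integral {-1..1} (\<lambda>t. (cmod (h t))\<^sup>2) \<le> integral {-1..1} (\<lambda>t::real. b\<^sup>2)"
    using assms by (intro integral_le integrable_continuous_interval continuous_intros power_mono) auto
  then have "l2_norm h \<le> sqrt (2 * b\<^sup>2)"
    unfolding l2_norm_def by simp
  also have "\<dots> = sqrt 2 * b"
    using \<open>0 \<le> b\<close> by (simp add: real_sqrt_mult)
  finally show ?thesis .
qed

interpretation coefficients: semi_inner_product UNIV "vinner N" for N
proof
  fix x y z :: "nat \<Rightarrow> complex" and c :: complex
  show "vinner N (\<lambda>t. x t + y t) z = vinner N x z + vinner N y z"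
    by (simp add: vinner_def distrib_right sum.distrib)
  show "vinner N (\<lambda>t. c * x t) z = c * vinner N x z"
    by (simp add: vinner_def sum_distrib_left mult.assoc)
  show "vinner N y x = cnj (vinner N x y)"
    by (simp add: vinner_def cnj_sum mult.commute)
  show "0 \<le> Re (vinner N x x)"
    by (simp add: vinner_def Re_sum sum_nonneg)
qed simp_all

lemma re_vinner_self: "Re (vinner N x x) = (vnorm N x)\<^sup>2"
proof -
  have "Re (x l * cnj (x l)) = (cmod (x l))\<^sup>2" for l
    by (metis Re_complex_of_real complex_norm_square)
  then show ?thesis
    by (simp add: vinner_def vnorm_def Re_sum sum_nonneg)
qed

lemma continuous_on_legendre_T: "continuous_on A (legendre_T T l)"
proof -
  have "legendre_T T l
      = (\<lambda>t. sqrt ((2 * real l + 1) / 2) / sqrt T * poly (legendre_poly l) ((1 / T) * t))"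
    by (simp add: fun_eq_iff legendre_T_def legendre_on_def poly_legendre_poly)
  then show ?thesis
    by (simp only:) (intro continuous_intros)
qed

lemma continuous_on_synth: "continuous_on A (synth N T c)"
  unfolding synth_def[abs_def] by (intro continuous_intros continuous_on_legendre_T)

lemma
  assumes "is_svd N T r \<sigma> v u"
  shows is_svd_pos: "\<And>j. j < r \<Longrightarrow> 0 < \<sigma> j"
    and is_svd_right_orthonormal:
      "\<And>i j. i < r \<Longrightarrow> j < r \<Longrightarrow> vinner N (v i) (v j) = (if i = j then 1 else 0)"
    and is_svd_left_orthonormal:
      "\<And>i j. i < r \<Longrightarrow> j < r \<Longrightarrow> l2_inner (u i) (u j) = (if i = j then 1 else 0)"
    and is_svd_synth:
      "\<And>c t. t \<in> {-1..1} \<Longrightarrow> synth N T c t = (\<Sum>j<r. of_real (\<sigma> j) * vinner N c (v j) * u j t)"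
  using assms unfolding is_svd_def by blast+

lemma is_svd_synth_right_singular_vector:
  assumes svd: "is_svd N T r \<sigma> v u" and "i < r" "t \<in> {-1..1}"
  shows "synth N T (v i) t = of_real (\<sigma> i) * u i t"
proof -
  have "synth N T (v i) t = (\<Sum>j<r. if j = i then of_real (\<sigma> j) * u j t else 0)"
    unfolding is_svd_synth[OF svd assms(3)]
    using is_svd_right_orthonormal[OF svd assms(2)] by (intro sum.cong) auto
  then show ?thesis
    using assms(2) by simp
qed

lemma is_svd_continuous_left_singular_vector:
  assumes svd: "is_svd N T r \<sigma> v u" and "i < r"
  shows "continuous_on {-1..1} (u i)"
proof (rule continuous_on_eq)
  have "\<sigma> i \<noteq> 0"
    using is_svd_pos[OF assms] by simp
  then show "continuous_on {-1..1} (\<lambda>t. synth N T (v i) t / of_real (\<sigma> i))"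
    by (intro continuous_intros continuous_on_synth) simp
  show "synth N T (v i) t / of_real (\<sigma> i) = u i t" if "t \<in> {-1..1}" for t
    using \<open>\<sigma> i \<noteq> 0\<close> is_svd_synth_right_singular_vector[OF assms that] by simp
qed

lemma tsvd_eq_partial_projection:
  assumes svd: "is_svd N T r \<sigma> v u" and "t \<in> {-1..1}"
  shows "tsvd N T eps r \<sigma> v u g t = (\<Sum>j\<in>{j. j < r \<and> eps < \<sigma> j}. l2_inner g (u j) * u j t)"
  unfolding tsvd_def
proof (intro sum.cong refl)
  fix j assume "j \<in> {j. j < r \<and> eps < \<sigma> j}"
  then have "j < r" "\<sigma> j \<noteq> 0"
    using is_svd_pos[OF svd] by force+
  then show "of_real (1 / \<sigma> j) * l2_inner g (u j) * synth N T (v j) t = l2_inner g (u j) * u j t"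
    using is_svd_synth_right_singular_vector[OF svd _ assms(2)] by simp
qed

lemma truncated_singular_values_sum_le:
  assumes svd: "is_svd N T r \<sigma> v u" and eps: "0 \<le> eps"
  shows "sqrt (\<Sum>j\<in>{..<r} - {j. j < r \<and> eps < \<sigma> j}. (cmod (of_real (\<sigma> j) * vinner N c (v j)))\<^sup>2)
    \<le> eps * vnorm N c"
proof -
  have "coefficients.orthonormal N {..<r} v"
    using is_svd_right_orthonormal[OF svd] by (simp add: coefficients.orthonormal_def)
  have "(cmod (of_real (\<sigma> j) * vinner N c (v j)))\<^sup>2 \<le> eps\<^sup>2 * (cmod (vinner N c (v j)))\<^sup>2"
    if "j \<in> {..<r} - {j. j < r \<and> eps < \<sigma> j}" for j
  proof -
    have "\<bar>\<sigma> j\<bar> \<le> eps"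
      using that is_svd_pos[OF svd, of j] by auto
    then show ?thesis
      unfolding norm_mult norm_of_real power_mult_distrib
      by (intro mult_right_mono power_mono) auto
  qed
  then have "(\<Sum>j\<in>{..<r} - {j. j < r \<and> eps < \<sigma> j}. (cmod (of_real (\<sigma> j) * vinner N c (v j)))\<^sup>2)
      \<le> (\<Sum>j\<in>{..<r} - {j. j < r \<and> eps < \<sigma> j}. eps\<^sup>2 * (cmod (vinner N c (v j)))\<^sup>2)"
    by (rule sum_mono)
  also have "\<dots> \<le> eps\<^sup>2 * (\<Sum>j<r. (cmod (vinner N c (v j)))\<^sup>2)"
    by (simp add: sum_distrib_left[symmetric] mult_left_mono sum_mono2)
  also have "\<dots> \<le> eps\<^sup>2 * Re (vinner N c c)"
    using coefficients.Bessel_inequality[OF \<open>coefficients.orthonormal N {..<r} v\<close>]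
    by (simp add: mult_left_mono)
  also have "\<dots> = (eps * vnorm N c)\<^sup>2"
    by (simp add: re_vinner_self power_mult_distrib)
  finally show ?thesis
    using eps by (intro real_le_lsqrt) (auto simp: vnorm_def intro!: mult_nonneg_nonneg sum_nonneg)
qed

theorem tsvd_error_bound:
  assumes svd: "is_svd N T r \<sigma> v u" and eps: "0 \<le> eps"
    and g: "continuous_on {-1..1} g" and p: "\<And>t. t \<in> {-1..1} \<Longrightarrow> p t = synth N T c t"
  shows "l2_norm (\<lambda>t. g t - tsvd N T eps r \<sigma> v u g t) \<le> l2_norm (\<lambda>t. g t - p t) + eps * vnorm N c"
proof -
  define S where "S = {j. j < r \<and> eps < \<sigma> j}"
  define \<beta> where "\<beta> j = of_real (\<sigma> j) * vinner N c (v j)" for j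
  have u: "continuous_on {-1..1} (u j)" if "j < r" for j
    using svd that by (rule is_svd_continuous_left_singular_vector)
  have "L2.orthonormal {..<r} u"
    using u is_svd_left_orthonormal[OF svd] by (simp add: L2.orthonormal_def)
  have "l2_norm (\<lambda>t. g t - tsvd N T eps r \<sigma> v u g t)
      = l2_norm (\<lambda>t. g t - (\<Sum>j\<in>S. l2_inner g (u j) * u j t))"
    by (rule l2_norm_cong) (simp add: S_def tsvd_eq_partial_projection[OF svd])
  also have "\<dots> = L2.nrm (\<lambda>t. g t - (\<Sum>j\<in>S. l2_inner g (u j) * u j t))"
    using g u by (intro l2_norm_eq_nrm continuous_intros) (auto simp: S_def)
  also have "\<dots> \<le> L2.nrm (\<lambda>t. g t - (\<Sum>j<r. \<beta> j * u j t)) + sqrt (\<Sum>j\<in>{..<r} - S. (cmod (\<beta> j))\<^sup>2)"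
    using \<open>L2.orthonormal {..<r} u\<close> g
    by (intro L2.nrm_sub_partial_projection_le) (auto simp: S_def)
  also have "L2.nrm (\<lambda>t. g t - (\<Sum>j<r. \<beta> j * u j t)) = l2_norm (\<lambda>t. g t - p t)"
  proof -
    have "L2.nrm (\<lambda>t. g t - (\<Sum>j<r. \<beta> j * u j t)) = l2_norm (\<lambda>t. g t - (\<Sum>j<r. \<beta> j * u j t))"
      using g u by (intro l2_norm_eq_nrm[symmetric] continuous_intros) auto
    also have "\<dots> = l2_norm (\<lambda>t. g t - p t)"
      using is_svd_synth[OF svd] p by (intro l2_norm_cong) (simp add: \<beta>_def)
    finally show ?thesis .
  qed
  also have "sqrt (\<Sum>j\<in>{..<r} - S. (cmod (\<beta> j))\<^sup>2) \<le> eps * vnorm N c"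
    unfolding S_def \<beta>_def using svd eps by (rule truncated_singular_values_sum_le)
  finally show ?thesis
    by simp
qed

section \<open>Assembly over the partition\<close>

lemma continuous_on_interp: "continuous_on A (interp N g)"
  unfolding interp_eq_lagrange_basis[abs_def] by (intro continuous_intros)

lemma rescale_mem_Icc:
  fixes c s t :: real
  assumes "0 < s" "t \<in> {-1..1}"
  shows "c + s * t \<in> {c - s..c + s}"
proof -
  have "s * -1 \<le> s * t" "s * t \<le> s * 1"
    using assms mult_left_mono[of "-1" t s] mult_left_mono[of t 1 s] by auto
  then show ?thesis
    by simp
qed

lemma rescale_mem_Ioo:
  fixes c s t :: real
  assumes "0 < s" "t \<in> {-1<..<1}"
  shows "c + s * t \<in> {c - s<..<c + s}"
proof -
  have "s * -1 < s * t" "s * t < s * 1"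
    using assms mult_strict_left_mono[of "-1" t s] mult_strict_left_mono[of t 1 s] by auto
  then show ?thesis
    by simp
qed

lemma has_vector_derivative_rescale:
  assumes s: "0 < s" and sub: "{c - s..c + s} \<subseteq> S" and t: "t \<in> {-1..1}"
    and F: "(F has_vector_derivative F') (at (c + s * t) within S)"
  shows "((\<lambda>t. F (c + s * t)) has_vector_derivative s *\<^sub>R F') (at t within {-1..1})"
proof -
  have "((\<lambda>t. c + s * t) has_vector_derivative s) (at t within {-1..1})"
    by (auto intro!: derivative_eq_intros simp flip: has_real_derivative_iff_has_vector_derivative)
  moreover have "(\<lambda>t. c + s * t) ` {-1..1} \<subseteq> S"
    using rescale_mem_Icc[OF s] sub by blast
  then have "(F has_vector_derivative F') (at (c + s * t) within (\<lambda>t. c + s * t) ` {-1..1})"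
    by (rule has_vector_derivative_within_subset[OF F])
  ultimately show ?thesis
    by (rule vector_diff_chain_within[unfolded o_def])
qed

lemma rescaled_interp_error:
  fixes Df :: "nat \<Rightarrow> real \<Rightarrow> complex"
  assumes N: "N \<ge> 1" and s: "0 < s" and sub: "{c - s..c + s} \<subseteq> {lo..hi}"
    and der: "\<And>m x. m \<le> N \<Longrightarrow> x \<in> {lo..hi} \<Longrightarrow>
      (Df m has_vector_derivative Df (Suc m) x) (at x within {lo..hi})"
    and bound: "\<And>x. x \<in> {lo<..<hi} \<Longrightarrow> cmod (Df (Suc N) x) \<le> C"
  shows "continuous_on {-1..1} (\<lambda>t. Df 0 (c + s * t))"
    and "l2_norm (\<lambda>t. Df 0 (c + s * t) - interp N (\<lambda>t. Df 0 (c + s * t)) t)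
      \<le> sqrt 2 * ((2 * s / real N) ^ Suc N * C)"
proof -
  define G where "G m t = of_real (s ^ m) * Df m (c + s * t)" for m t
  have G0: "G 0 = (\<lambda>t. Df 0 (c + s * t))"
    by (simp add: G_def fun_eq_iff)
  have G: "(G m has_vector_derivative G (Suc m) t) (at t within {-1..1})"
    if "m \<le> N" "t \<in> {-1..1}" for m t
  proof -
    have "((\<lambda>t. Df m (c + s * t)) has_vector_derivative s *\<^sub>R Df (Suc m) (c + s * t))
        (at t within {-1..1})"
      using rescale_mem_Icc[OF s that(2)] sub
      by (intro has_vector_derivative_rescale[OF s sub that(2)] der[OF that(1)]) auto
    then show ?thesis
      unfolding G_def by (rule has_vector_derivative_mult_right[THEN has_vector_derivative_eq_rhs])
        (simp add: scaleR_conv_of_real)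
  qed
  show cont: "continuous_on {-1..1} (\<lambda>t. Df 0 (c + s * t))"
    unfolding G0[symmetric] by (rule continuous_on_vector_derivative) (rule G, auto)
  have "cmod (G (Suc N) t) \<le> s ^ Suc N * C" if "t \<in> {-1<..<1}" for t
  proof -
    have "c + s * t \<in> {c - s<..<c + s}" "lo \<le> c - s" "c + s \<le> hi"
      using rescale_mem_Ioo[OF s that] sub s by auto
    then have "c + s * t \<in> {lo<..<hi}"
      by simp
    then show ?thesis
      using s bound by (simp add: G_def norm_mult mult_left_mono del: of_real_power)
  qed
  then have "cmod (G 0 t - interp N (G 0) t) \<le> (2 / real N) ^ Suc N * (s ^ Suc N * C)"
    if "t \<in> {-1..1}" for t
    using N G that by (intro interp_error_bound) auto
  also have "(2 / real N) ^ Suc N * (s ^ Suc N * C) = (2 * s / real N) ^ Suc N * C"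
    by (simp only: power_mult_distrib power_divide mult_ac times_divide_eq_left times_divide_eq_right)
  finally show "l2_norm (\<lambda>t. Df 0 (c + s * t) - interp N (\<lambda>t. Df 0 (c + s * t)) t)
      \<le> sqrt 2 * ((2 * s / real N) ^ Suc N * C)"
    unfolding G0 using cont by (intro l2_norm_le_sup continuous_intros continuous_on_interp)
qed

lemma partition_local_interp_error:
  fixes Df :: "nat \<Rightarrow> real \<Rightarrow> complex" and a :: "nat \<Rightarrow> real"
  assumes N: "N \<ge> 1" and a: "strict_mono_on {..K} a" and k: "k \<in> {1..K}"
    and h: "a k - a (k - 1) \<le> h"
    and der: "\<And>m x. m \<le> N \<Longrightarrow> x \<in> {a 0..a K} \<Longrightarrow>
      (Df m has_vector_derivative Df (Suc m) x) (at x within {a 0..a K})"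
    and bound: "\<And>x. x \<in> {a 0<..<a K} \<Longrightarrow> cmod (Df (Suc N) x) \<le> C"
  shows "continuous_on {-1..1} (loc (Df 0) a k)"
    and "l2_norm (\<lambda>t. loc (Df 0) a k t - interp N (loc (Df 0) a k) t)
      \<le> sqrt 2 * h ^ (N + 1) / real N ^ (N + 1) * C"
proof -
  have ends: "mid a k - half a k = a (k - 1)" "mid a k + half a k = a k"
    by (simp_all add: mid_def half_def field_simps)
  have "a (k - 1) < a k" "a 0 \<le> a (k - 1)" "a k \<le> a K"
    using k by (auto intro!: strict_mono_onD[OF a] strict_mono_on_leD[OF a])
  then have s: "0 < half a k" and sub: "{mid a k - half a k..mid a k + half a k} \<subseteq> {a 0..a K}"
    unfolding ends by (auto simp: half_def)
  have loc: "loc (Df 0) a k = (\<lambda>t. Df 0 (mid a k + half a k * t))"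
    by (simp add: loc_def fun_eq_iff)
  show "continuous_on {-1..1} (loc (Df 0) a k)"
    unfolding loc using N s sub der bound by (rule rescaled_interp_error(1))
  have "mid a k \<in> {a 0<..<a K}"
    using \<open>a (k - 1) < a k\<close> \<open>a 0 \<le> a (k - 1)\<close> \<open>a k \<le> a K\<close> by (auto simp: mid_def)
  then have "0 \<le> C"
    using bound norm_ge_zero order.trans by blast
  have "l2_norm (\<lambda>t. loc (Df 0) a k t - interp N (loc (Df 0) a k) t)
      \<le> sqrt 2 * ((2 * half a k / real N) ^ Suc N * C)"
    unfolding loc using N s sub der bound by (rule rescaled_interp_error(2))
  also have "\<dots> \<le> sqrt 2 * ((h / real N) ^ Suc N * C)"
    using s h \<open>0 \<le> C\<close>
    by (intro mult_left_mono mult_right_mono power_mono divide_right_mono) (auto simp: half_def)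
  also have "\<dots> = sqrt 2 * h ^ (N + 1) / real N ^ (N + 1) * C"
    by (simp add: power_divide)
  finally show "l2_norm (\<lambda>t. loc (Df 0) a k t - interp N (loc (Df 0) a k) t)
      \<le> sqrt 2 * h ^ (N + 1) / real N ^ (N + 1) * C" .
qed

lemma has_integral_rescale_Icc:
  fixes \<phi> :: "real \<Rightarrow> real"
  assumes "(\<phi> has_integral J) {-1..1}" and s: "0 < s"
  shows "((\<lambda>x. \<phi> ((x - c) / s)) has_integral s * J) {c - s..c + s}"
proof -
  have ends: "(-1 - - c / s) /\<^sub>R (1 / s) = c - s" "(1 - - c / s) /\<^sub>R (1 / s) = c + s"
    using s by (simp_all add: field_simps)
  have "((\<lambda>x. \<phi> ((1 / s) *\<^sub>R x + - c / s)) has_integral J /\<^sub>R (1 / s) ^ DIM(real))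
      (cbox ((-1 - - c / s) /\<^sub>R (1 / s)) ((1 - - c / s) /\<^sub>R (1 / s)))"
    using assms by (intro has_integral_affinity') (simp_all add: cbox_interval)
  then show ?thesis
    unfolding ends cbox_interval by (simp add: diff_divide_distrib)
qed

lemma has_integral_partition_sum:
  fixes h :: "real \<Rightarrow> real" and a :: "nat \<Rightarrow> real"
  assumes a: "mono_on {..K} a"
    and pieces: "\<And>k. k \<in> {1..K} \<Longrightarrow> (h has_integral J k) {a (k - 1)..a k}"
  shows "(h has_integral (\<Sum>k=1..K. J k)) {a 0..a K}"
  using assms
proof (induction K)
  case 0
  then show ?case
    using has_integral_refl(2) by simp
next
  case (Suc K)
  have "(h has_integral (\<Sum>k=1..K. J k) + J (Suc K)) {a 0..a (Suc K)}"
  proof (rule has_integral_combine)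
    show "a 0 \<le> a K" "a K \<le> a (Suc K)"
      using Suc.prems(1) by (auto intro: mono_onD)
    show "(h has_integral (\<Sum>k=1..K. J k)) {a 0..a K}"
      using Suc.IH[OF mono_on_subset[OF Suc.prems(1)]] Suc.prems(2) by auto
    show "(h has_integral J (Suc K)) {a K..a (Suc K)}"
      using Suc.prems(2)[of "Suc K"] by simp
  qed
  then show ?case
    by simp
qed

lemma continuous_on_tsvd: "continuous_on A (tsvd N T eps r \<sigma> v u g)"
  unfolding tsvd_def[abs_def] by (intro continuous_intros continuous_on_synth)

lemma piecewise_approx_on_piece:
  assumes a: "strict_mono_on {..K} a" and k: "k \<in> {1..K}" and x: "x \<in> {a (k - 1)<..a k}"
  shows "piecewise_approx N T eps r \<sigma> v u f a x
    = tsvd N T eps r \<sigma> v u (loc f a k) ((x - mid a k) / half a k)"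
proof -
  have "(LEAST k'. 1 \<le> k' \<and> x \<le> a k') = k"
  proof (rule Least_equality)
    fix k' assume k': "1 \<le> k' \<and> x \<le> a k'"
    show "k \<le> k'"
    proof (rule ccontr)
      assume "\<not> k \<le> k'"
      then have "a k' \<le> a (k - 1)"
        using k by (intro strict_mono_on_leD[OF a]) auto
      with k' x show False
        by simp
    qed
  qed (use k x in auto)
  then show ?thesis
    by (simp add: piecewise_approx_def)
qed

lemma piecewise_approx_error_has_integral_piece:
  assumes a: "strict_mono_on {..K} a" and k: "k \<in> {1..K}"
    and cont: "continuous_on {-1..1} (loc f a k)"
  shows "((\<lambda>x. (cmod (f x - piecewise_approx N T eps r \<sigma> v u f a x))\<^sup>2) has_integral
      half a k * (l2_norm (\<lambda>t. loc f a k t - tsvd N T eps r \<sigma> v u (loc f a k) t))\<^sup>2)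
      {a (k - 1)..a k}"
proof -
  define E where "E = (\<lambda>t. (cmod (loc f a k t - tsvd N T eps r \<sigma> v u (loc f a k) t))\<^sup>2)"
  define e where "e = l2_norm (\<lambda>t. loc f a k t - tsvd N T eps r \<sigma> v u (loc f a k) t)"
  have s: "0 < half a k"
    using k by (auto simp: half_def intro!: strict_mono_onD[OF a])
  have "continuous_on {-1..1} E"
    unfolding E_def using cont by (intro continuous_intros continuous_on_tsvd)
  then have "(E has_integral integral {-1..1} E) {-1..1}" and "integral {-1..1} E = e\<^sup>2"
    by (auto simp: e_def l2_norm_def E_def integral_nonneg integrable_continuous_interval
        intro!: integrable_integral)
  then have "((\<lambda>x. E ((x - mid a k) / half a k)) has_integral half a k * e\<^sup>2)
      {mid a k - half a k..mid a k + half a k}"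
    using s by (intro has_integral_rescale_Icc) simp_all
  moreover have "mid a k - half a k = a (k - 1)" "mid a k + half a k = a k"
    by (simp_all add: mid_def half_def field_simps)
  ultimately have "((\<lambda>x. E ((x - mid a k) / half a k)) has_integral half a k * e\<^sup>2) {a (k - 1)..a k}"
    by simp
  then show ?thesis
    unfolding e_def
  proof (rule has_integral_spike_finite[of "{a (k - 1)}", rotated 2])
    fix x assume "x \<in> {a (k - 1)..a k} - {a (k - 1)}"
    then have "x \<in> {a (k - 1)<..a k}"
      by auto
    moreover have "f x = loc f a k ((x - mid a k) / half a k)"
      using s by (simp add: loc_def)
    ultimately show "(cmod (f x - piecewise_approx N T eps r \<sigma> v u f a x))\<^sup>2
        = E ((x - mid a k) / half a k)"
      using piecewise_approx_on_piece[OF a k] by (simp add: E_def)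
  qed simp
qed

lemma integral_piecewise_approx_error:
  assumes a: "strict_mono_on {..K} a"
    and cont: "\<And>k. k \<in> {1..K} \<Longrightarrow> continuous_on {-1..1} (loc f a k)"
  shows "integral {a 0..a K} (\<lambda>x. (cmod (f x - piecewise_approx N T eps r \<sigma> v u f a x))\<^sup>2)
    = (\<Sum>k=1..K. half a k * (l2_norm (\<lambda>t. loc f a k t - tsvd N T eps r \<sigma> v u (loc f a k) t))\<^sup>2)"
  using a cont
  by (intro integral_unique has_integral_partition_sum strict_mono_on_imp_mono_on
      piecewise_approx_error_has_integral_piece)

lemma integral_piecewise_approx_error_le:
  assumes a: "strict_mono_on {..K} a"
    and cont: "\<And>k. k \<in> {1..K} \<Longrightarrow> continuous_on {-1..1} (loc f a k)"
    and err: "\<And>k. k \<in> {1..K} \<Longrightarrow>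
      l2_norm (\<lambda>t. loc f a k t - tsvd N T eps r \<sigma> v u (loc f a k) t) \<le> b k"
  shows "integral {a 0..a K} (\<lambda>x. (cmod (f x - piecewise_approx N T eps r \<sigma> v u f a x))\<^sup>2)
    \<le> (\<Sum>k=1..K. half a k * (b k)\<^sup>2)"
proof -
  have "0 \<le> half a k" if "k \<in> {1..K}" for k
    using that by (auto simp: half_def intro!: strict_mono_on_leD[OF a])
  then have "(\<Sum>k=1..K. half a k * (l2_norm (\<lambda>t. loc f a k t - tsvd N T eps r \<sigma> v u (loc f a k) t))\<^sup>2)
      \<le> (\<Sum>k=1..K. half a k * (b k)\<^sup>2)"
    by (intro sum_mono mult_left_mono power_mono err l2_norm_nonneg)
  then show ?thesis
    by (simp only: integral_piecewise_approx_error[OF a cont])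
qed

theorem corollary2p3:
  fixes N K r :: nat and T eps Cf :: real
    and a :: "nat \<Rightarrow> real"
    and f :: "real \<Rightarrow> complex" and Df :: "nat \<Rightarrow> real \<Rightarrow> complex"
    and \<sigma> :: "nat \<Rightarrow> real" and v :: "nat \<Rightarrow> nat \<Rightarrow> complex" and u :: "nat \<Rightarrow> real \<Rightarrow> complex"
  assumes N: "N \<ge> 1" and K: "K \<ge> 1" and T: "T > 1" and eps: "eps > 0"
    and part: "\<And>k. 1 \<le> k \<Longrightarrow> k \<le> K \<Longrightarrow> a (k - 1) < a k"
    and D0: "Df 0 = f"
    and Dder: "\<And>m x. m \<le> N \<Longrightarrow> x \<in> {a 0..a K} \<Longrightarrow>
                 (Df m has_vector_derivative Df (Suc m) x) (at x within {a 0..a K})"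
    and Dcont: "continuous_on {a 0..a K} (Df (Suc N))"
    and Dbound: "\<And>x. x \<in> {a 0<..<a K} \<Longrightarrow> norm (Df (Suc N) x) \<le> Cf"
    and svd: "is_svd N T r \<sigma> v u"
  shows "\<exists>cint :: nat \<Rightarrow> nat \<Rightarrow> complex.
     (\<forall>k\<in>{1..K}.
        (\<forall>t\<in>{-1..1}. interp N (loc f a k) t = synth N T (cint k) t) \<and>
        l2_norm (\<lambda>t. loc f a k t - tsvd N T eps r \<sigma> v u (loc f a k) t)
          \<le> l2_norm (\<lambda>t. loc f a k t - interp N (loc f a k) t) + eps * vnorm N (cint k) \<and>
        l2_norm (\<lambda>t. loc f a k t - interp N (loc f a k) t) + eps * vnorm N (cint k)
          \<le> sqrt 2 * (Max ((\<lambda>k. a k - a (k - 1)) ` {1..K})) ^ (N + 1) / real N ^ (N + 1) * Cf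
             + eps * vnorm N (cint k)) \<and>
     integral {a 0..a K} (\<lambda>x. (cmod (f x - piecewise_approx N T eps r \<sigma> v u f a x))\<^sup>2)
       \<le> (\<Sum>k=1..K. half a k *
            (sqrt 2 * (Max ((\<lambda>k. a k - a (k - 1)) ` {1..K})) ^ (N + 1) / real N ^ (N + 1) * Cf
             + eps * vnorm N (cint k))\<^sup>2)"
proof -
  define B where "B = sqrt 2 * (Max ((\<lambda>k. a k - a (k - 1)) ` {1..K})) ^ (N + 1) / real N ^ (N + 1) * Cf"
  have a: "strict_mono_on {..K} a"
    using part[of "Suc _"] by (intro strict_mono_on_atMostI) simp
  have "\<forall>k. \<exists>c. \<forall>t. interp N (loc f a k) t = synth N T c t"
    using T by (auto intro: interp_in_range_synth)
  then obtain cint where cint: "\<And>k t. interp N (loc f a k) t = synth N T (cint k) t"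
    by metis
  have local: "continuous_on {-1..1} (loc f a k)"
    "l2_norm (\<lambda>t. loc f a k t - interp N (loc f a k) t) \<le> B" if k: "k \<in> {1..K}" for k
  proof -
    have "a k - a (k - 1) \<le> Max ((\<lambda>k. a k - a (k - 1)) ` {1..K})"
      using k by (intro Max_ge) auto
    from partition_local_interp_error[OF N a k this Dder Dbound]
    show "continuous_on {-1..1} (loc f a k)" "l2_norm (\<lambda>t. loc f a k t - interp N (loc f a k) t) \<le> B"
      unfolding D0 B_def by simp_all
  qed
  have tsvd: "l2_norm (\<lambda>t. loc f a k t - tsvd N T eps r \<sigma> v u (loc f a k) t)
      \<le> l2_norm (\<lambda>t. loc f a k t - interp N (loc f a k) t) + eps * vnorm N (cint k)"
    if "k \<in> {1..K}" for k
    using svd eps local[OF that] cint by (intro tsvd_error_bound) auto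
  then have "l2_norm (\<lambda>t. loc f a k t - tsvd N T eps r \<sigma> v u (loc f a k) t) \<le> B + eps * vnorm N (cint k)"
    if "k \<in> {1..K}" for k
    using local(2)[OF that] that by fastforce
  then have "integral {a 0..a K} (\<lambda>x. (cmod (f x - piecewise_approx N T eps r \<sigma> v u f a x))\<^sup>2)
      \<le> (\<Sum>k=1..K. half a k * (B + eps * vnorm N (cint k))\<^sup>2)"
    using local(1) by (intro integral_piecewise_approx_error_le[OF a])
  then show ?thesis
    using cint tsvd local unfolding B_def by auto
qed

end
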